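(* Let $E\in M_n(\mathbb{FT})$ be idempotent. Then the column space $C(E)$ is min-plus convex if and only if there exists an idempotent $F\in M_n(\mathbb{FT})$ with $F_{i,i}=0$ for all $i$ and $C(F)=C(E)$.
   Context: $\mathbb{FT}$ is $\mathbb{R}$ with $a\oplus b=\max(a,b)$, $a\otimes b=a+b$; $M_n(\mathbb{FT})$ is the semigroup of real $n\times n$ matrices under $(A\otimes B)_{i,j}=\max_k(A_{i,k}+B_{k,j})$. $C(A)\subseteq\mathbb{R}^n$ is the set of all finite componentwise maxima of columns of $A$ each shifted by a real constant (added to all coordinates). A subset $X\subseteq\mathbb{R}^n$ is min-plus convex if it is closed under componentwise minimum and under adding a real constant to all coordinates. *)

theory Defs
  imports Complex_Main
begin

text \<open>Tropical (max-plus) n x n matrices: index type 'n (finite, |'n| = n),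
  a matrix is a function 'n => 'n => real, a vector in R^n is 'n => real.\<close>

definition trop_mult :: "('n::finite \<Rightarrow> 'n \<Rightarrow> real) \<Rightarrow> ('n \<Rightarrow> 'n \<Rightarrow> real) \<Rightarrow> ('n \<Rightarrow> 'n \<Rightarrow> real)" where
  "trop_mult A B = (\<lambda>i j. Max (range (\<lambda>k. A i k + B k j)))"

definition trop_idempotent :: "('n::finite \<Rightarrow> 'n \<Rightarrow> real) \<Rightarrow> bool" where
  "trop_idempotent E \<longleftrightarrow> trop_mult E E = E"

definition col_space :: "('n::finite \<Rightarrow> 'n \<Rightarrow> real) \<Rightarrow> ('n \<Rightarrow> real) set" where
  "col_space A = {x. \<exists>S c. finite S \<and> S \<noteq> {} \<and>
       (\<forall>i. x i = Max ((\<lambda>j. c j + A i j) ` S))}"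

definition min_plus_convex :: "('n \<Rightarrow> real) set \<Rightarrow> bool" where
  "min_plus_convex X \<longleftrightarrow>
     (\<forall>x\<in>X. \<forall>y\<in>X. (\<lambda>i. min (x i) (y i)) \<in> X) \<and>
     (\<forall>x\<in>X. \<forall>t::real. (\<lambda>i. x i + t) \<in> X)"

end

theory Submission
  imports Defs
begin

text \<open>An idempotent E acts as a projection onto its column space, which is the set of its
  fixed points. If F is idempotent with zero diagonal, a vector is fixed by F iff it satisfies
  the inequalities F i k + x k \<le> x i, and solution sets of such inequalities are clearly
  closed under min and shifts. Conversely, if C(E) is min-plus convex, take for F the residual
  F i k = min_j (E i j - E k j): its columns are minima of shifted columns of E, hence lie in
  C(E), and every x in C(E) satisfies F i k + x k \<le> x i, which forces F to be an idempotent
  with zero diagonal and C(F) = C(E).\<close>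

definition trop_apply :: "('n::finite \<Rightarrow> 'n \<Rightarrow> real) \<Rightarrow> ('n \<Rightarrow> real) \<Rightarrow> 'n \<Rightarrow> real" where
  "trop_apply A x = (\<lambda>i. Max (range (\<lambda>k. A i k + x k)))"

lemma trop_apply_ge: "A i k + x k \<le> trop_apply A x i"
  unfolding trop_apply_def by (rule Max_ge) auto

lemma trop_apply_le_iff: "trop_apply A x i \<le> y \<longleftrightarrow> (\<forall>k. A i k + x k \<le> y)"
  unfolding trop_apply_def by (subst Max_le_iff) auto

lemma trop_apply_attained: "\<exists>k. trop_apply A x i = A i k + x k"
proof -
  have "trop_apply A x i \<in> range (\<lambda>k. A i k + x k)"
    unfolding trop_apply_def by (rule Max_in) auto
  then show ?thesis by auto
qed

lemma trop_idempotent_iff_columns_fixed: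
  "trop_idempotent E \<longleftrightarrow> (\<forall>j. trop_apply E (\<lambda>i. E i j) = (\<lambda>i. E i j))"
  unfolding trop_idempotent_def trop_mult_def trop_apply_def by (metis (no_types, lifting) ext)

lemma Max_attained:
  assumes "finite S" "S \<noteq> {}"
  obtains j where "j \<in> S" "Max (f ` S) = f j"
proof -
  have "Max (f ` S) \<in> f ` S" using assms by (intro Max_in) auto
  with that show thesis by blast
qed

lemma trop_apply_fixes_col_space:
  assumes cols: "\<And>j. trop_apply E (\<lambda>i. F i j) = (\<lambda>i. F i j)"
    and x: "x \<in> col_space F"
  shows "trop_apply E x = x"
proof
  fix i
  from x obtain S c where S: "finite S" "S \<noteq> {}"
    and x_eq: "\<And>i. x i = Max ((\<lambda>j. c j + F i j) ` S)"
    unfolding col_space_def by auto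
  have below: "c j + F i j \<le> x i" if "j \<in> S" for i j
    using x_eq[of i] S that by (auto simp: Max_ge_iff)
  have col_ineq: "E i k + F k j \<le> F i j" for i k j
    using trop_apply_ge[of E i k "\<lambda>i. F i j"] by (simp add: cols)
  show "trop_apply E x i = x i"
  proof (rule antisym)
    show "trop_apply E x i \<le> x i"
    proof (unfold trop_apply_le_iff, intro allI)
      fix k
      obtain j where j: "j \<in> S" "x k = c j + F k j"
        using Max_attained[OF S, of "\<lambda>j. c j + F k j"] by (auto simp flip: x_eq)
      show "E i k + x k \<le> x i" using j col_ineq[of i k j] below[of j i] by simp
    qed
  next
    obtain j where j: "j \<in> S" "x i = c j + F i j"
      using Max_attained[OF S, of "\<lambda>j. c j + F i j"] by (auto simp flip: x_eq)
    obtain k where k: "F i j = E i k + F k j"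
      using trop_apply_attained[of E "\<lambda>i. F i j" i] by (auto simp: cols)
    have "x i \<le> E i k + x k" using j k below[of j k] by simp
    also have "\<dots> \<le> trop_apply E x i" by (rule trop_apply_ge)
    finally show "x i \<le> trop_apply E x i" .
  qed
qed

lemma fixed_point_in_col_space:
  assumes "trop_apply A x = x"
  shows "x \<in> col_space A"
  unfolding col_space_def
proof (intro CollectI exI conjI allI)
  fix i
  have "x i = trop_apply A x i" using assms by simp
  then show "x i = Max ((\<lambda>j. x j + A i j) ` UNIV)" by (simp add: trop_apply_def add.commute)
qed auto

lemma col_space_idempotent:
  assumes "trop_idempotent E"
  shows "col_space E = {x. trop_apply E x = x}"
proof -
  have "\<And>j. trop_apply E (\<lambda>i. E i j) = (\<lambda>i. E i j)"
    using assms by (simp add: trop_idempotent_iff_columns_fixed)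
  then show ?thesis
    using trop_apply_fixes_col_space fixed_point_in_col_space by auto
qed

lemma trop_apply_fixed_iff_zero_diag:
  assumes "\<forall>i. F i i = 0"
  shows "trop_apply F x = x \<longleftrightarrow> (\<forall>i k. F i k + x k \<le> x i)"
proof
  assume "trop_apply F x = x"
  then show "\<forall>i k. F i k + x k \<le> x i" by (metis trop_apply_ge)
next
  assume ineq: "\<forall>i k. F i k + x k \<le> x i"
  show "trop_apply F x = x"
  proof
    fix i
    have "x i \<le> trop_apply F x i" using trop_apply_ge[of F i i x] assms by simp
    then show "trop_apply F x i = x i" using ineq by (simp add: antisym trop_apply_le_iff)
  qed
qed

lemma col_space_idempotent_zero_diag:
  assumes "trop_idempotent F" "\<forall>i. F i i = 0"
  shows "col_space F = {x. \<forall>i k. F i k + x k \<le> x i}"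
  by (simp add: col_space_idempotent[OF assms(1)] trop_apply_fixed_iff_zero_diag[of F, OF assms(2)])

lemma min_plus_convex_subsolutions: "min_plus_convex {x. \<forall>i k. F i k + x k \<le> (x i :: real)}"
  unfolding min_plus_convex_def by (auto simp: min_add_distrib_right min_le_iff_disj)

lemma min_plus_convex_Min:
  assumes "min_plus_convex X" "finite S" "S \<noteq> {}" "\<And>j. j \<in> S \<Longrightarrow> g j \<in> X"
  shows "(\<lambda>i. Min ((\<lambda>j. g j i) ` S)) \<in> X"
  using assms(2-4)
proof (induction S rule: finite_ne_induct)
  case (singleton j)
  then show ?case by simp
next
  case (insert j S)
  then have "(\<lambda>i. min (g j i) (Min ((\<lambda>j. g j i) ` S))) \<in> X"
    using assms(1) unfolding min_plus_convex_def by auto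
  with insert show ?case by (simp add: Min_insert)
qed

definition trop_residual :: "('n::finite \<Rightarrow> 'n \<Rightarrow> real) \<Rightarrow> 'n \<Rightarrow> 'n \<Rightarrow> real" where
  "trop_residual E = (\<lambda>i k. Min (range (\<lambda>j. E i j - E k j)))"

lemma trop_residual_diag: "trop_residual E i i = 0"
  by (simp add: trop_residual_def)

lemma trop_residual_subsolution:
  assumes "trop_idempotent E" "x \<in> col_space E"
  shows "trop_residual E i k + x k \<le> x i"
proof -
  have fixed: "trop_apply E x = x" using assms(2) by (simp add: col_space_idempotent[OF assms(1)])
  obtain j where j: "x k = E k j + x j" using trop_apply_attained[of E x k] by (auto simp: fixed)
  have "E i j + x j \<le> x i" using trop_apply_ge[of E i j x] fixed by simp
  moreover have "trop_residual E i k \<le> E i j - E k j"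
    unfolding trop_residual_def by (rule Min_le) auto
  ultimately show ?thesis using j by simp
qed

lemma trop_residual_column_in_col_space:
  assumes "min_plus_convex (col_space E)"
  shows "(\<lambda>i. trop_residual E i k) \<in> col_space E"
proof -
  have shifted_column: "(\<lambda>i. E i j + t) \<in> col_space E" for j t
    unfolding col_space_def
    by (rule CollectI, rule exI[of _ "{j}"], rule exI[of _ "\<lambda>_. t"]) (simp add: add.commute)
  have "(\<lambda>i. E i j - E k j) \<in> col_space E" for j
    using shifted_column[of j "- E k j"] by simp
  then show ?thesis
    using min_plus_convex_Min[OF assms, of UNIV "\<lambda>j i. E i j - E k j"]
    by (simp add: trop_residual_def)
qed

lemma trop_residual_idempotent:
  assumes "trop_idempotent E" "min_plus_convex (col_space E)"
  shows "trop_idempotent (trop_residual E)"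
  unfolding trop_idempotent_iff_columns_fixed
  using trop_residual_subsolution[OF assms(1) trop_residual_column_in_col_space[OF assms(2)]]
  by (simp add: trop_apply_fixed_iff_zero_diag trop_residual_diag)

lemma col_space_trop_residual:
  assumes "trop_idempotent E" "min_plus_convex (col_space E)"
  shows "col_space (trop_residual E) = col_space E"
proof
  have "trop_apply E (\<lambda>i. trop_residual E i k) = (\<lambda>i. trop_residual E i k)" for k
    using trop_residual_column_in_col_space[OF assms(2)]
    by (simp add: col_space_idempotent[OF assms(1)])
  then show "col_space (trop_residual E) \<subseteq> col_space E"
    using trop_apply_fixes_col_space by (auto simp: col_space_idempotent[OF assms(1)])
  show "col_space E \<subseteq> col_space (trop_residual E)"
    using trop_residual_subsolution[OF assms(1)]
    by (auto simp: col_space_idempotent_zero_diag[OF trop_residual_idempotent[OF assms]]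
        trop_residual_diag)
qed

theorem theorem6p1:
  fixes E :: "'n::finite \<Rightarrow> 'n \<Rightarrow> real"
  assumes "trop_idempotent E"
  shows "min_plus_convex (col_space E) \<longleftrightarrow>
         (\<exists>F :: 'n \<Rightarrow> 'n \<Rightarrow> real. trop_idempotent F \<and> (\<forall>i. F i i = 0) \<and>
              col_space F = col_space E)"
proof
  assume "min_plus_convex (col_space E)"
  then show "\<exists>F. trop_idempotent F \<and> (\<forall>i. F i i = 0) \<and> col_space F = col_space E"
    using assms by (intro exI[of _ "trop_residual E"])
      (simp add: trop_residual_idempotent col_space_trop_residual trop_residual_diag)
next
  assume "\<exists>F. trop_idempotent F \<and> (\<forall>i. F i i = 0) \<and> col_space F = col_space E"
  then obtain F where F: "trop_idempotent F" "\<forall>i. F i i = 0" "col_space F = col_space E"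
    by blast
  then show "min_plus_convex (col_space E)"
    using col_space_idempotent_zero_diag[OF F(1,2)] min_plus_convex_subsolutions[of F] by simp
qed

end
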